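(* Let $\mathcal{G}_{\mathrm{bip}}$ be the class of all one-directional bipartite influence graphs $G=(L,R,E,p)$. Then, for the influence maximization problem in the independent cascade model with full-adoption feedback, $$\sup_{G\in\mathcal{G}_{\mathrm{bip}},\,k\ge 1}\frac{\mathrm{OPT}_A(G,k)}{\mathrm{OPT}_N(G,k)}=\frac{e}{e-1}.$$
   Context: A one-directional bipartite influence graph $G=(L,R,E,p)$ has node set $V=L\cup R$ ($L,R$ disjoint), edge set $E\subseteq L\times R$ (every edge points from a node of $L$ to a node of $R$), and a probability $p_{uv}\in[0,1]$ on each edge. Independent cascade (IC) model: a live-edge graph (realization) $\phi$ is a random subgraph in which each edge $(u,v)$ is present ("live") independently with probability $p_{uv}$; $\mathcal{P}$ denotes this distribution. For $S\subseteq V$, $\Gamma(S,\phi)$ is the set of nodes reachable from $S$ in $\phi$, and $\sigma(S)=\mathbb{E}_{\Phi\sim\mathcal{P}}[|\Gamma(S,\Phi)|]$. Full-adoption feedback: when a node $u$ is selected as a seed, one observes the live/blocked status of all out-going edges of every node reachable from $u$ in the realization. A partial realization records the seeds selected so far with their observed feedback. An adaptive policy $\pi$ maps partial realizations to the next node to select; $V(\pi,\phi)$ is the seed set it selects under realization $\phi$, and $\sigma(\pi)=\mathbb{E}_{\Phi\sim\mathcal{P}}[|\Gamma(V(\pi,\Phi),\Phi)|]$. $\Pi(k)$ is the set of policies with $|V(\pi,\phi)|\le k$ for every realization $\phi$. $\mathrm{OPT}_N(G,k)=\max_{S\subseteq V,|S|\le k}\sigma(S)$ and $\mathrm{OPT}_A(G,k)=\sup_{\pi\in\Pi(k)}\sigma(\pi)$.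 *)

theory Defs
  imports Complex_Main
begin

text \<open>Nodes are natural numbers (every finite graph is isomorphic to one on nat).
A one-directional bipartite influence graph is (L, R, E, p).\<close>

type_synonym node = nat
type_synonym edge = "node \<times> node"

definition bip_graph :: "node set \<Rightarrow> node set \<Rightarrow> edge set \<Rightarrow> (edge \<Rightarrow> real) \<Rightarrow> bool" where
  "bip_graph L R E p \<longleftrightarrow> finite L \<and> finite R \<and> L \<inter> R = {} \<and> E \<subseteq> L \<times> R
     \<and> (\<forall>e\<in>E. 0 \<le> p e \<and> p e \<le> 1)"

text \<open>Probability of the live-edge graph phi (a subset of E) under the IC model.\<close>
definition real_prob :: "edge set \<Rightarrow> (edge \<Rightarrow> real) \<Rightarrow> edge set \<Rightarrow> real" where
  "real_prob E p \<phi> = (\<Prod>e\<in>\<phi>. p e) * (\<Prod>e\<in>E - \<phi>. 1 - p e)"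

definition reach :: "node set \<Rightarrow> edge set \<Rightarrow> node set" where
  "reach S \<phi> = \<phi>\<^sup>* `` S"

definition sigma :: "edge set \<Rightarrow> (edge \<Rightarrow> real) \<Rightarrow> node set \<Rightarrow> real" where
  "sigma E p S = (\<Sum>\<phi>\<in>Pow E. real_prob E p \<phi> * real (card (reach S \<phi>)))"

text \<open>A partial realization is the list of seeds selected so far
together with the set of observed live edges; under full-adoption feedback the observed
edges are exactly the edges of E leaving nodes reachable from the seeds, so the set of
observed live edges together with E determines the status of all observed edges.\<close>
type_synonym policy = "node list \<times> edge set \<Rightarrow> node option"

definition observed :: "node list \<Rightarrow> edge set \<Rightarrow> edge set" where
  "observed xs \<phi> = {e \<in> \<phi>. fst e \<in> reach (set xs) \<phi>}"

fun seeds_seq :: "policy \<Rightarrow> edge set \<Rightarrow> nat \<Rightarrow> node list" where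
  "seeds_seq \<pi> \<phi> 0 = []"
| "seeds_seq \<pi> \<phi> (Suc n) =
     (case \<pi> (seeds_seq \<pi> \<phi> n, observed (seeds_seq \<pi> \<phi> n) \<phi>) of
        None \<Rightarrow> seeds_seq \<pi> \<phi> n
      | Some u \<Rightarrow> seeds_seq \<pi> \<phi> n @ [u])"

definition policy_seeds :: "policy \<Rightarrow> edge set \<Rightarrow> node set" where
  "policy_seeds \<pi> \<phi> = (\<Union>n. set (seeds_seq \<pi> \<phi> n))"

definition policies :: "node set \<Rightarrow> node set \<Rightarrow> edge set \<Rightarrow> nat \<Rightarrow> policy set" where
  "policies L R E k = {\<pi>. \<forall>\<phi>\<in>Pow E. policy_seeds \<pi> \<phi> \<subseteq> L \<union> R
       \<and> finite (policy_seeds \<pi> \<phi>) \<and> card (policy_seeds \<pi> \<phi>) \<le> k}"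

definition sigma_pol :: "edge set \<Rightarrow> (edge \<Rightarrow> real) \<Rightarrow> policy \<Rightarrow> real" where
  "sigma_pol E p \<pi> = (\<Sum>\<phi>\<in>Pow E. real_prob E p \<phi> * real (card (reach (policy_seeds \<pi> \<phi>) \<phi>)))"

definition OPT_N :: "node set \<Rightarrow> node set \<Rightarrow> edge set \<Rightarrow> (edge \<Rightarrow> real) \<Rightarrow> nat \<Rightarrow> real" where
  "OPT_N L R E p k = Max {sigma E p S | S. S \<subseteq> L \<union> R \<and> card S \<le> k}"

definition OPT_A :: "node set \<Rightarrow> node set \<Rightarrow> edge set \<Rightarrow> (edge \<Rightarrow> real) \<Rightarrow> nat \<Rightarrow> real" where
  "OPT_A L R E p k = Sup (sigma_pol E p ` policies L R E k)"

end

theory Submission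
  imports Defs "HOL-Analysis.Convex"
begin

(*
  Upper bound: a policy decides whether to seed u before seeing any out-edge of u, so
  Pr[u is a seed] is independent of those edges and the adaptive spread is at most
  sum_w min(1, sum_u Pr[u is a seed] * p_uw), with the seed probabilities summing to at most k.
  This is the linear relaxation of the coverage function that gives the non-adaptive spread;
  pipage rounding (the coverage is convex along every direction e_i - e_j) turns the
  fractional point into a k-set whose spread is at least (1 - 1/e) times the relaxation.

  Lower bound: let every left node see D = n^2 of the m = n^5 + n^4 + n^2 right nodes, with
  enough copies of every D-set, and q = 1/n.  The adaptive policy that keeps seeding a node
  whose neighbours are all still inactive obtains k = n^4 seeds with disjoint neighbourhoods
  unless the live degrees deviate strongly from their mean n, which a second-moment bound
  rules out; so it reaches about k (1 + n) nodes.  Any fixed k-set reaches at most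
  k + m (1 - (1 - q)^(D k / m)) nodes by concavity, and the ratio tends to e/(e - 1).
*)

section \<open>Live-edge graphs\<close>

lemma real_prob_nonneg:
  assumes "\<And>e. e \<in> F \<Longrightarrow> 0 \<le> p e \<and> p e \<le> 1" and "\<phi> \<subseteq> F"
  shows "0 \<le> real_prob F p \<phi>"
  unfolding real_prob_def using assms by (intro mult_nonneg_nonneg prod_nonneg) force+

lemma sum_real_prob: "finite F \<Longrightarrow> (\<Sum>\<phi>\<in>Pow F. real_prob F p \<phi>) = 1"
  using prod_add[of F p "\<lambda>e. 1 - p e"] unfolding real_prob_def by simp

lemma real_prob_Un:
  assumes "finite E" "F \<subseteq> E" "A \<subseteq> E - F" "B \<subseteq> F"
  shows "real_prob E p (A \<union> B) = real_prob (E - F) p A * real_prob F p B"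
proof -
  have "finite F" using assms(1,2) by (rule rev_finite_subset)
  then have fin: "finite A" "finite B" "finite F"
    using assms(1) finite_subset[OF assms(3)] finite_subset[OF assms(4)] by auto
  have "E - (A \<union> B) = ((E - F) - A) \<union> (F - B)" using assms by blast
  then have "(\<Prod>e\<in>E - (A \<union> B). 1 - p e) = (\<Prod>e\<in>(E - F) - A. 1 - p e) * (\<Prod>e\<in>F - B. 1 - p e)"
    by (simp only:) (rule prod.union_disjoint, use fin assms(1) in auto)
  moreover have "(\<Prod>e\<in>A \<union> B. p e) = (\<Prod>e\<in>A. p e) * (\<Prod>e\<in>B. p e)"
    using fin assms by (intro prod.union_disjoint) auto
  ultimately show ?thesis unfolding real_prob_def by (simp add: algebra_simps)
qed

locale live_edge_space =
  fixes E :: "edge set" and p :: "edge \<Rightarrow> real"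
  assumes finite_edges: "finite E"
    and edge_prob_range: "\<And>e. e \<in> E \<Longrightarrow> 0 \<le> p e \<and> p e \<le> 1"
begin

definition expect :: "(edge set \<Rightarrow> real) \<Rightarrow> real" where
  "expect f = (\<Sum>\<phi>\<in>Pow E. real_prob E p \<phi> * f \<phi>)"

lemma expect_const [simp]: "expect (\<lambda>_. c) = c"
  unfolding expect_def using sum_real_prob[OF finite_edges]
    by (simp add: sum_distrib_right[symmetric])

lemma expect_add: "expect (\<lambda>\<phi>. f \<phi> + g \<phi>) = expect f + expect g"
  unfolding expect_def by (simp add: distrib_left sum.distrib)

lemma expect_diff: "expect (\<lambda>\<phi>. f \<phi> - g \<phi>) = expect f - expect g"
  unfolding expect_def by (simp add: right_diff_distrib sum_subtractf)

lemma expect_scale: "expect (\<lambda>\<phi>. c * f \<phi>) = c * expect f"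
  unfolding expect_def by (simp add: sum_distrib_left algebra_simps)

lemma expect_sum: "expect (\<lambda>\<phi>. \<Sum>i\<in>I. f i \<phi>) = (\<Sum>i\<in>I. expect (f i))"
  unfolding expect_def by (simp add: sum_distrib_left sum.swap[of _ "Pow E"])

lemma expect_cong: "(\<And>\<phi>. \<phi> \<subseteq> E \<Longrightarrow> f \<phi> = g \<phi>) \<Longrightarrow> expect f = expect g"
  unfolding expect_def by (intro sum.cong) auto

lemma expect_mono: "(\<And>\<phi>. \<phi> \<subseteq> E \<Longrightarrow> f \<phi> \<le> g \<phi>) \<Longrightarrow> expect f \<le> expect g"
  unfolding expect_def
    by (intro sum_mono mult_left_mono) (auto simp: real_prob_nonneg[OF edge_prob_range])

lemma expect_nonneg: "(\<And>\<phi>. \<phi> \<subseteq> E \<Longrightarrow> 0 \<le> f \<phi>) \<Longrightarrow> 0 \<le> expect f"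
  using expect_mono[of "\<lambda>_. 0" f] by simp

lemma expect_of_bool_bounds: "0 \<le> expect (\<lambda>\<phi>. of_bool (P \<phi>)) \<and> expect (\<lambda>\<phi>. of_bool (P \<phi>)) \<le> 1"
  using expect_mono[of "\<lambda>\<phi>. of_bool (P \<phi>)" "\<lambda>_. 1"] expect_nonneg[of "\<lambda>\<phi>. of_bool (P \<phi>)"] by simp

lemma expect_factor:
  assumes F: "F \<subseteq> E"
    and g: "\<And>\<phi>. \<phi> \<subseteq> E \<Longrightarrow> g \<phi> = g (\<phi> - F)"
    and h: "\<And>\<phi>. \<phi> \<subseteq> E \<Longrightarrow> h \<phi> = h (\<phi> \<inter> F)"
  shows "expect (\<lambda>\<phi>. g \<phi> * h \<phi>) =
     (\<Sum>A\<in>Pow (E - F). real_prob (E - F) p A * g A) * (\<Sum>B\<in>Pow F. real_prob F p B * h B)"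
proof -
  have "expect (\<lambda>\<phi>. g \<phi> * h \<phi>) =
      (\<Sum>(A, B)\<in>Pow (E - F) \<times> Pow F. real_prob E p (A \<union> B) * (g (A \<union> B) * h (A \<union> B)))"
    unfolding expect_def
    by (rule sum.reindex_bij_witness[where i = "\<lambda>(A, B). A \<union> B" and j = "\<lambda>\<phi>. (\<phi> - F, \<phi> \<inter> F)"])
      (use F in \<open>auto simp: Un_Diff_Int\<close>)
  also have "\<dots> = (\<Sum>(A, B)\<in>Pow (E - F) \<times> Pow F.
      (real_prob (E - F) p A * g A) * (real_prob F p B * h B))"
  proof (intro sum.cong refl, clarify)
    fix A B assume AB: "A \<subseteq> E - F" "B \<subseteq> F"
    then have "(A \<union> B) - F = A" "(A \<union> B) \<inter> F = B" "A \<union> B \<subseteq> E" using F by blast+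
    then show "real_prob E p (A \<union> B) * (g (A \<union> B) * h (A \<union> B)) =
        (real_prob (E - F) p A * g A) * (real_prob F p B * h B)"
      using g[of "A \<union> B"] h[of "A \<union> B"] real_prob_Un[OF finite_edges F AB] by simp
  qed
  also have "\<dots> = (\<Sum>A\<in>Pow (E - F). real_prob (E - F) p A * g A) * (\<Sum>B\<in>Pow F. real_prob F p B * h B)"
    by (simp add: sum_product sum.cartesian_product case_prod_beta)
  finally show ?thesis .
qed

lemma expect_restrict:
  assumes F: "F \<subseteq> E" and h: "\<And>\<phi>. \<phi> \<subseteq> E \<Longrightarrow> h \<phi> = h (\<phi> \<inter> F)"
  shows "expect h = (\<Sum>B\<in>Pow F. real_prob F p B * h B)"
  using expect_factor[where g = "\<lambda>_. 1" and h = h, OF F _ h] sum_real_prob[of "E - F" p]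
    finite_edges
  by simp

lemma expect_mult_indep:
  assumes F: "F \<subseteq> E"
    and g: "\<And>\<phi>. \<phi> \<subseteq> E \<Longrightarrow> g \<phi> = g (\<phi> - F)"
    and h: "\<And>\<phi>. \<phi> \<subseteq> E \<Longrightarrow> h \<phi> = h (\<phi> \<inter> F)"
  shows "expect (\<lambda>\<phi>. g \<phi> * h \<phi>) = expect g * expect h"
proof -
  have "finite F" using F finite_edges finite_subset by blast
  then have "expect g = (\<Sum>A\<in>Pow (E - F). real_prob (E - F) p A * g A)"
    using expect_factor[where g = g and h = "\<lambda>_. 1", OF F g] sum_real_prob[of F p] by simp
  then show ?thesis
    using expect_factor[where g = g and h = h, OF F g h] expect_restrict[where h = h, OF F h]
    by simp
qed

lemma prob_avoid:
  assumes F: "F \<subseteq> E"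
  shows "expect (\<lambda>\<phi>. of_bool (\<phi> \<inter> F = {})) = (\<Prod>e\<in>F. 1 - p e)"
proof -
  have "expect (\<lambda>\<phi>. of_bool (\<phi> \<inter> F = {})) = (\<Sum>B\<in>Pow F. real_prob F p B * of_bool (B \<inter> F = {}))"
    by (rule expect_restrict[OF F]) auto
  also have "\<dots> = (\<Sum>B\<in>{{}}. real_prob F p B * of_bool (B \<inter> F = {}))"
    using F finite_edges finite_subset by (intro sum.mono_neutral_right) auto
  finally show ?thesis by (simp add: real_prob_def)
qed

lemma prob_edge_live:
  assumes "e \<in> E"
  shows "expect (\<lambda>\<phi>. of_bool (e \<in> \<phi>)) = p e"
proof -
  have "expect (\<lambda>\<phi>. of_bool (e \<in> \<phi>)) = (\<Sum>B\<in>Pow {e}. real_prob {e} p B * of_bool (e \<in> B))"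
    by (rule expect_restrict) (use assms in auto)
  also have "\<dots> = (\<Sum>B\<in>{{e}}. real_prob {e} p B * of_bool (e \<in> B))"
    by (intro sum.mono_neutral_right) auto
  finally show ?thesis by (simp add: real_prob_def)
qed

end

section \<open>Policies on bipartite graphs\<close>

locale bip_influence_graph =
  fixes L R :: "node set" and E :: "edge set" and p :: "edge \<Rightarrow> real"
  assumes bip_graph: "bip_graph L R E p"
begin

lemma finite_L: "finite L" and finite_R: "finite R" and disjoint_LR: "L \<inter> R = {}"
  and edges_LR: "E \<subseteq> L \<times> R"
  using bip_graph unfolding bip_graph_def by auto

sublocale live_edge_space E p
proof
  show "finite E" using finite_subset[OF edges_LR] finite_L finite_R by blast
qed (use bip_graph in \<open>auto simp: bip_graph_def\<close>)

lemma sigma_expect: "sigma E p S = expect (\<lambda>\<phi>. real (card (reach S \<phi>)))"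
  unfolding sigma_def expect_def ..

lemma sigma_pol_expect: "sigma_pol E p \<pi> = expect (\<lambda>\<phi>. real (card (reach (policy_seeds \<pi> \<phi>) \<phi>)))"
  unfolding sigma_pol_def expect_def ..

lemma reach_eq:
  assumes "\<phi> \<subseteq> E"
  shows "reach S \<phi> = S \<union> \<phi> `` S"
proof
  show "S \<union> \<phi> `` S \<subseteq> reach S \<phi>" unfolding reach_def by auto
  show "reach S \<phi> \<subseteq> S \<union> \<phi> `` S"
  proof
    fix b assume "b \<in> reach S \<phi>"
    then obtain a where a: "a \<in> S" "(a, b) \<in> \<phi>\<^sup>*" unfolding reach_def by auto
    from a(2) show "b \<in> S \<union> \<phi> `` S"
    proof (induction rule: rtrancl_induct)
      case (step y z)
      have "y \<in> L" using step(2) assms edges_LR by auto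
      then have "y \<notin> \<phi> `` S" using assms edges_LR disjoint_LR by blast
      with step(3) show ?case using step(2) by auto
    qed (use a in auto)
  qed
qed

lemma reach_subset: "\<phi> \<subseteq> E \<Longrightarrow> S \<subseteq> L \<union> R \<Longrightarrow> reach S \<phi> \<subseteq> L \<union> R"
  using reach_eq edges_LR by auto

lemma observed_eq:
  assumes "\<phi> \<subseteq> E"
  shows "observed xs \<phi> = {e \<in> \<phi>. fst e \<in> set xs}"
proof -
  have "\<phi> `` set xs \<subseteq> R" using assms edges_LR by auto
  moreover have "fst e \<in> L" if "e \<in> \<phi>" for e using that assms edges_LR by auto
  ultimately have "fst e \<notin> \<phi> `` set xs" if "e \<in> \<phi>" for e using that disjoint_LR by blast
  then show ?thesis unfolding observed_def reach_eq[OF assms] by auto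
qed

definition out_edges :: "node \<Rightarrow> edge set" where
  "out_edges u = {e \<in> E. fst e = u}"

lemma out_edges_subset: "out_edges u \<subseteq> E"
  unfolding out_edges_def by auto

lemma seeds_seq_Suc_extends: "\<exists>ys. seeds_seq \<pi> \<phi> (Suc n) = seeds_seq \<pi> \<phi> n @ ys"
  by (auto split: option.splits)

text \<open>Until a policy selects \<open>u\<close>, it only observes edges leaving earlier seeds, so its
  run cannot depend on the out-edges of \<open>u\<close>.\<close>

lemma takeWhile_seeds_seq_remove_out_edges:
  fixes u :: node
  assumes "\<phi> \<subseteq> E"
  defines "\<psi> \<equiv> \<phi> - out_edges u"
  shows "takeWhile (\<lambda>x. x \<noteq> u) (seeds_seq \<pi> \<psi> n) = takeWhile (\<lambda>x. x \<noteq> u) (seeds_seq \<pi> \<phi> n)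
    \<and> (u \<in> set (seeds_seq \<pi> \<psi> n) \<longleftrightarrow> u \<in> set (seeds_seq \<pi> \<phi> n))"
proof (induction n)
  case (Suc n)
  obtain ys where ys: "seeds_seq \<pi> \<phi> (Suc n) = seeds_seq \<pi> \<phi> n @ ys"
    using seeds_seq_Suc_extends by blast
  obtain zs where zs: "seeds_seq \<pi> \<psi> (Suc n) = seeds_seq \<pi> \<psi> n @ zs"
    using seeds_seq_Suc_extends by blast
  show ?case
  proof (cases "u \<in> set (seeds_seq \<pi> \<phi> n)")
    case True
    then show ?thesis using Suc.IH unfolding ys zs by (simp add: takeWhile_append1[where x = u])
  next
    case False
    moreover have "u \<notin> set (seeds_seq \<pi> \<psi> n)" using False Suc.IH by blast
    ultimately have "seeds_seq \<pi> \<psi> n = seeds_seq \<pi> \<phi> n"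
      using Suc.IH takeWhile_eq_all_conv[of "\<lambda>x. x \<noteq> u"] by metis
    moreover have "observed (seeds_seq \<pi> \<phi> n) \<psi> = observed (seeds_seq \<pi> \<phi> n) \<phi>"
      using False assms unfolding \<psi>_def observed_eq[OF assms(1)]
      by (subst observed_eq) (auto simp: out_edges_def)
    ultimately have "seeds_seq \<pi> \<psi> (Suc n) = seeds_seq \<pi> \<phi> (Suc n)"
      by (simp only: seeds_seq.simps)
    then show ?thesis using Suc.IH by simp
  qed
qed simp

lemma policy_seeds_remove_out_edges:
  "\<phi> \<subseteq> E \<Longrightarrow> u \<in> policy_seeds \<pi> (\<phi> - out_edges u) \<longleftrightarrow> u \<in> policy_seeds \<pi> \<phi>"
  using takeWhile_seeds_seq_remove_out_edges unfolding policy_seeds_def by blast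

definition seed_prob :: "policy \<Rightarrow> node \<Rightarrow> real" where
  "seed_prob \<pi> u = expect (\<lambda>\<phi>. of_bool (u \<in> policy_seeds \<pi> \<phi>))"

lemma seed_prob_bounds: "0 \<le> seed_prob \<pi> u \<and> seed_prob \<pi> u \<le> 1"
  unfolding seed_prob_def by (rule expect_of_bool_bounds)

lemma prob_seed_and_edge_live:
  assumes "(u, w) \<in> E"
  shows "expect (\<lambda>\<phi>. of_bool (u \<in> policy_seeds \<pi> \<phi>) * of_bool ((u, w) \<in> \<phi>))
    = seed_prob \<pi> u * p (u, w)"
proof -
  have "expect (\<lambda>\<phi>. of_bool (u \<in> policy_seeds \<pi> \<phi>) * of_bool ((u, w) \<in> \<phi>))
      = seed_prob \<pi> u * expect (\<lambda>\<phi>. of_bool ((u, w) \<in> \<phi>))"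
    unfolding seed_prob_def
  proof (rule expect_mult_indep[OF out_edges_subset])
    fix \<phi> assume "\<phi> \<subseteq> E"
    then show "of_bool (u \<in> policy_seeds \<pi> \<phi>)
        = (of_bool (u \<in> policy_seeds \<pi> (\<phi> - out_edges u)) :: real)"
      using policy_seeds_remove_out_edges by simp
  qed (use assms in \<open>auto simp: out_edges_def\<close>)
  then show ?thesis using prob_edge_live[OF assms] by simp
qed

end

lemma seeds_seq_stalled:
  assumes "seeds_seq \<pi> \<phi> (Suc n) = seeds_seq \<pi> \<phi> n"
  shows "seeds_seq \<pi> \<phi> (n + j) = seeds_seq \<pi> \<phi> n"
proof (induction j)
  case (Suc j)
  then have "seeds_seq \<pi> \<phi> (Suc (n + j)) = seeds_seq \<pi> \<phi> (Suc n)"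
    by (simp only: seeds_seq.simps)
  then show ?case using assms by simp
qed simp

lemma seeds_seq_stalled_or_full:
  "seeds_seq \<pi> \<phi> (Suc n) = seeds_seq \<pi> \<phi> n \<or> length (seeds_seq \<pi> \<phi> n) = n"
proof (induction n)
  case (Suc n)
  show ?case
  proof (cases "seeds_seq \<pi> \<phi> (Suc n) = seeds_seq \<pi> \<phi> n")
    case True
    then show ?thesis using seeds_seq_stalled[OF True, of 2] by (metis add_2_eq_Suc')
  next
    case False
    then show ?thesis using Suc.IH by (auto split: option.splits)
  qed
qed simp

lemma set_seeds_seq_mono: "m \<le> n \<Longrightarrow> set (seeds_seq \<pi> \<phi> m) \<subseteq> set (seeds_seq \<pi> \<phi> n)"
  by (induction n rule: dec_induct) (auto split: option.splits)

lemma policy_seeds_stalled: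
  assumes "seeds_seq \<pi> \<phi> (Suc n) = seeds_seq \<pi> \<phi> n"
  shows "policy_seeds \<pi> \<phi> = set (seeds_seq \<pi> \<phi> n)"
proof -
  have "set (seeds_seq \<pi> \<phi> j) \<subseteq> set (seeds_seq \<pi> \<phi> n)" for j
    using set_seeds_seq_mono[of j n] seeds_seq_stalled[OF assms, of "j - n"]
    by (cases "j \<le> n") auto
  then show ?thesis unfolding policy_seeds_def by blast
qed

section \<open>Pipage rounding of weighted coverage\<close>

lemma one_minus_exp_neg_ge:
  fixes a :: real
  assumes "0 \<le> a"
  shows "(1 - exp (-1)) * min 1 a \<le> 1 - exp (-a)"
proof (cases "a \<le> 1")
  case True
  have "exp ((1 - a) *\<^sub>R 0 + a *\<^sub>R (-1)) \<le> (1 - a) * exp 0 + a * exp (-1)"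
    by (rule convex_onD[OF exp_convex]) (use assms True in auto)
  then show ?thesis using True by (simp add: algebra_simps)
next
  case False
  then show ?thesis by simp
qed

lemma quadratic_nonneg_at_endpoint:
  fixes a b t1 t2 :: real
  assumes "0 \<le> a" "t1 \<le> 0" "0 \<le> t2"
  shows "0 \<le> b * t1 + a * t1\<^sup>2 \<or> 0 \<le> b * t2 + a * t2\<^sup>2"
proof (cases "0 \<le> b")
  case True
  then show ?thesis using assms by simp
next
  case False
  have "a * t1 \<le> 0" using assms by (simp add: mult_nonneg_nonpos)
  then have "0 \<le> t1 * (b + a * t1)" using assms False by (intro mult_nonpos_nonpos) auto
  then show ?thesis by (simp add: algebra_simps power2_eq_square)
qed

locale weighted_coverage =
  fixes N :: "'a set" and a :: "'a \<Rightarrow> 'a \<Rightarrow> real"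
  assumes finite_N: "finite N" and weight_range: "\<And>u w. 0 \<le> a u w \<and> a u w \<le> 1"
begin

definition coverage :: "('a \<Rightarrow> real) \<Rightarrow> real" where
  "coverage x = (\<Sum>w\<in>N. 1 - (\<Prod>u\<in>N. 1 - x u * a u w))"

definition fractional :: "('a \<Rightarrow> real) \<Rightarrow> 'a set" where
  "fractional x = {u \<in> N. 0 < x u \<and> x u < 1}"

lemma finite_fractional: "finite (fractional x)"
  using finite_N unfolding fractional_def by simp

lemma coverage_factor_bounds: "0 \<le> y \<Longrightarrow> y \<le> 1 \<Longrightarrow> 0 \<le> 1 - y * a u w \<and> 1 - y * a u w \<le> 1"
  using weight_range[of u w] mult_le_one[of y "a u w"] by simp

lemma coverage_of_bool:
  assumes "S \<subseteq> N"
  shows "coverage (\<lambda>u. of_bool (u \<in> S)) = (\<Sum>w\<in>N. 1 - (\<Prod>u\<in>S. 1 - a u w))"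
proof -
  have "(\<Prod>u\<in>N. 1 - of_bool (u \<in> S) * a u w) = (\<Prod>u\<in>S. 1 - a u w)" for w
    using finite_N assms by (subst prod.mono_neutral_right[of N S]) auto
  then show ?thesis unfolding coverage_def by simp
qed

lemma coverage_mono:
  assumes "\<And>u. u \<in> N \<Longrightarrow> 0 \<le> x u \<and> x u \<le> y u \<and> y u \<le> 1"
  shows "coverage x \<le> coverage y"
  unfolding coverage_def
proof (intro sum_mono diff_left_mono prod_mono)
  fix u w assume u: "u \<in> N"
  show "0 \<le> 1 - y u * a u w \<and> 1 - y u * a u w \<le> 1 - x u * a u w"
    using coverage_factor_bounds assms[OF u] weight_range[of u w] by (simp add: mult_right_mono)
qed

lemma coverage_ge_min_sum:
  assumes "\<And>u. u \<in> N \<Longrightarrow> 0 \<le> x u \<and> x u \<le> 1"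
  shows "(1 - exp (-1)) * (\<Sum>w\<in>N. min 1 (\<Sum>u\<in>N. x u * a u w)) \<le> coverage x"
  unfolding coverage_def sum_distrib_left
proof (rule sum_mono)
  fix w
  have "(\<Prod>u\<in>N. 1 - x u * a u w) \<le> (\<Prod>u\<in>N. exp (- (x u * a u w)))"
    using assms coverage_factor_bounds exp_ge_add_one_self by (intro prod_mono) (smt (verit))
  also have "\<dots> = exp (- (\<Sum>u\<in>N. x u * a u w))"
    by (simp add: exp_sum[OF finite_N, symmetric] sum_negf)
  finally show "(1 - exp (-1)) * min 1 (\<Sum>u\<in>N. x u * a u w) \<le> 1 - (\<Prod>u\<in>N. 1 - x u * a u w)"
    using one_minus_exp_neg_ge[of "\<Sum>u\<in>N. x u * a u w"] assms weight_range
    by (smt (verit) mult_nonneg_nonneg sum_nonneg)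
qed

lemma coverage_shift_quadratic:
  assumes ij: "i \<in> N" "j \<in> N" "i \<noteq> j" and x01: "\<And>u. u \<in> N \<Longrightarrow> 0 \<le> x u \<and> x u \<le> 1"
  shows "\<exists>A B. 0 \<le> A \<and>
    (\<forall>t. coverage (x(i := x i + t, j := x j - t)) = coverage x + B * t + A * t\<^sup>2)"
proof -
  define C where "C w = (\<Prod>u\<in>N - {i} - {j}. 1 - x u * a u w)" for w
  define \<beta> where "\<beta> w = C w * ((1 - x j * a j w) * a i w - (1 - x i * a i w) * a j w)" for w
  define \<gamma> where "\<gamma> w = C w * a i w * a j w" for w
  have split: "(\<Prod>u\<in>N. 1 - y u * a u w)
      = (1 - y i * a i w) * (1 - y j * a j w) * (\<Prod>u\<in>N - {i} - {j}. 1 - y u * a u w)" for y w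
    using finite_N ij by (simp add: prod.remove[of N i] prod.remove[of "N - {i}" j] mult.assoc)
  have "coverage (x(i := x i + t, j := x j - t)) = coverage x + (\<Sum>w\<in>N. \<beta> w) * t + (\<Sum>w\<in>N. \<gamma> w) * t\<^sup>2"
    for t
  proof -
    have "(\<Prod>u\<in>N - {i} - {j}. 1 - (x(i := x i + t, j := x j - t)) u * a u w) = C w" for w
      unfolding C_def by (rule prod.cong) auto
    then have "1 - (\<Prod>u\<in>N. 1 - (x(i := x i + t, j := x j - t)) u * a u w)
        = (1 - (\<Prod>u\<in>N. 1 - x u * a u w)) + \<beta> w * t + \<gamma> w * t\<^sup>2" for w
      using ij unfolding split[of _ w] C_def \<beta>_def \<gamma>_def
      by (simp add: algebra_simps power2_eq_square)
    then have "coverage (x(i := x i + t, j := x j - t))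
        = (\<Sum>w\<in>N. (1 - (\<Prod>u\<in>N. 1 - x u * a u w)) + \<beta> w * t + \<gamma> w * t\<^sup>2)"
      unfolding coverage_def by (rule sum.cong[OF refl])
    then show ?thesis unfolding coverage_def by (simp add: sum.distrib sum_distrib_right)
  qed
  moreover have "0 \<le> (\<Sum>w\<in>N. \<gamma> w)"
    unfolding \<gamma>_def C_def using coverage_factor_bounds x01 weight_range
    by (intro sum_nonneg mult_nonneg_nonneg prod_nonneg) auto
  ultimately show ?thesis by blast
qed

lemma pipage_step:
  assumes x01: "\<And>u. u \<in> N \<Longrightarrow> 0 \<le> x u \<and> x u \<le> 1"
    and ij: "i \<in> fractional x" "j \<in> fractional x" "i \<noteq> j"
  obtains y where "\<And>u. u \<in> N \<Longrightarrow> 0 \<le> y u \<and> y u \<le> 1" "(\<Sum>u\<in>N. y u) = (\<Sum>u\<in>N. x u)"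
    "card (fractional y) < card (fractional x)" "coverage x \<le> coverage y"
proof -
  have iN: "i \<in> N" and jN: "j \<in> N" and xi: "0 < x i" "x i < 1" and xj: "0 < x j" "x j < 1"
    using ij unfolding fractional_def by auto
  obtain A B where "0 \<le> A"
    and quadratic: "\<And>t. coverage (x(i := x i + t, j := x j - t)) = coverage x + B * t + A * t\<^sup>2"
    using coverage_shift_quadratic[where x = x, OF iN jN ij(3) x01] by blast
  define t1 where "t1 = - min (x i) (1 - x j)"
  define t2 where "t2 = min (1 - x i) (x j)"
  have "t1 \<le> 0" "0 \<le> t2" unfolding t1_def t2_def using xi xj by auto
  then obtain t where t: "t = t1 \<or> t = t2"
    and better: "coverage x \<le> coverage (x(i := x i + t, j := x j - t))"
    using quadratic_nonneg_at_endpoint[OF \<open>0 \<le> A\<close>, of t1 t2 B] quadratic by force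
  define y where "y = x(i := x i + t, j := x j - t)"
  have "0 \<le> y u \<and> y u \<le> 1" if "u \<in> N" for u
    using x01[OF that] t xi xj ij(3) unfolding y_def t1_def t2_def by auto
  moreover have "(\<Sum>u\<in>N. y u) = (\<Sum>u\<in>N. x u)"
  proof -
    have "(\<Sum>u\<in>N. y u) = (\<Sum>u\<in>N. x u + t * of_bool (u = i) - t * of_bool (u = j))"
      using ij(3) unfolding y_def by (intro sum.cong) auto
    then show ?thesis using finite_N iN jN by (simp add: sum.distrib sum_subtractf)
  qed
  moreover have "card (fractional y) < card (fractional x)"
  proof (rule psubset_card_mono[OF finite_fractional])
    have "i \<notin> fractional y \<or> j \<notin> fractional y"
      using t ij(3) unfolding fractional_def y_def t1_def t2_def
        by (auto simp: min_def split: if_splits)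
    moreover have "fractional y \<subseteq> fractional x \<union> {i, j}"
      unfolding fractional_def y_def by auto
    ultimately show "fractional y \<subset> fractional x" using ij by auto
  qed
  ultimately show ?thesis using that better unfolding y_def by blast
qed

lemma pipage_base:
  assumes x01: "\<And>u. u \<in> N \<Longrightarrow> 0 \<le> x u \<and> x u \<le> 1" and "card (fractional x) \<le> 1"
    and budget: "(\<Sum>u\<in>N. x u) \<le> real k"
  shows "\<exists>S\<subseteq>N. card S \<le> k \<and> coverage x \<le> coverage (\<lambda>u. of_bool (u \<in> S))"
proof -
  define S where "S = {u \<in> N. 0 < x u}"
  define T where "T = {u \<in> N. x u = 1}"
  have S: "S = T \<union> fractional x" "T \<inter> fractional x = {}" and "finite T"
    unfolding S_def T_def fractional_def using x01 finite_N by force+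
  have "(\<Sum>u\<in>T. x u) = real (card T)" unfolding T_def by simp
  then have "real (card T) + (\<Sum>u\<in>fractional x. x u) = (\<Sum>u\<in>S. x u)"
    unfolding S(1) using sum.union_disjoint[OF \<open>finite T\<close> finite_fractional S(2), of x] by linarith
  also have "\<dots> \<le> (\<Sum>u\<in>N. x u)"
    using x01 finite_N by (intro sum_mono2) (auto simp: S_def)
  finally have sum_le: "real (card T) + (\<Sum>u\<in>fractional x. x u) \<le> real k" using budget by simp
  have card_S: "card S = card T + card (fractional x)"
    unfolding S(1) by (rule card_Un_disjoint[OF \<open>finite T\<close> finite_fractional S(2)])
  have "card S \<le> k"
  proof (cases "fractional x = {}")
    case True
    then show ?thesis using sum_le card_S by simp
  next
    case False
    then have "card (fractional x) = 1"
      using \<open>card (fractional x) \<le> 1\<close> finite_fractional by (simp add: le_Suc_eq)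
    then obtain i where "fractional x = {i}" by (rule card_1_singletonE)
    moreover have "0 < x i" using calculation unfolding fractional_def by auto
    ultimately show ?thesis using sum_le card_S by simp
  qed
  moreover have "coverage x \<le> coverage (\<lambda>u. of_bool (u \<in> S))"
  proof (rule coverage_mono)
    fix u assume "u \<in> N"
    then show "0 \<le> x u \<and> x u \<le> of_bool (u \<in> S) \<and> of_bool (u \<in> S) \<le> (1::real)"
      using x01[of u] unfolding S_def by (cases "0 < x u") auto
  qed
  moreover have "S \<subseteq> N" unfolding S_def by auto
  ultimately show ?thesis by blast
qed

lemma pipage_rounding:
  assumes "\<And>u. u \<in> N \<Longrightarrow> 0 \<le> x u \<and> x u \<le> 1" and "(\<Sum>u\<in>N. x u) \<le> real k"
  shows "\<exists>S\<subseteq>N. card S \<le> k \<and> coverage x \<le> coverage (\<lambda>u. of_bool (u \<in> S))"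
  using assms
proof (induction "card (fractional x)" arbitrary: x rule: less_induct)
  case less
  show ?case
  proof (cases "card (fractional x) \<le> 1")
    case True
    then show ?thesis using pipage_base less.prems by blast
  next
    case False
    then obtain i j where "i \<in> fractional x" "j \<in> fractional x" "i \<noteq> j"
      using card_le_Suc0_iff_eq[OF finite_fractional] by auto
    then obtain y where "\<And>u. u \<in> N \<Longrightarrow> 0 \<le> y u \<and> y u \<le> 1" "(\<Sum>u\<in>N. y u) = (\<Sum>u\<in>N. x u)"
        "card (fractional y) < card (fractional x)" "coverage x \<le> coverage y"
      using pipage_step less.prems(1) by metis
    then show ?thesis using less.hyps[of y] less.prems(2) by (metis order.trans)
  qed
qed

lemma exists_set_coverage_ge:
  assumes "\<And>u. u \<in> N \<Longrightarrow> 0 \<le> x u \<and> x u \<le> 1" and "(\<Sum>u\<in>N. x u) \<le> real k"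
  obtains S where "S \<subseteq> N" "card S \<le> k"
    "(1 - exp (-1)) * (\<Sum>w\<in>N. min 1 (\<Sum>u\<in>N. x u * a u w)) \<le> (\<Sum>w\<in>N. 1 - (\<Prod>u\<in>S. 1 - a u w))"
proof -
  obtain S where S: "S \<subseteq> N" "card S \<le> k" and "coverage x \<le> coverage (\<lambda>u. of_bool (u \<in> S))"
    using pipage_rounding[OF assms] by blast
  with coverage_ge_min_sum[where x = x, OF assms(1)]
  have "(1 - exp (-1)) * (\<Sum>w\<in>N. min 1 (\<Sum>u\<in>N. x u * a u w)) \<le> coverage (\<lambda>u. of_bool (u \<in> S))"
    by linarith
  then show ?thesis using that[OF S] coverage_of_bool[OF S(1)] by simp
qed

end

section \<open>The adaptivity gap is at most e/(e - 1)\<close>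

context bip_influence_graph
begin

definition act_prob :: "node \<Rightarrow> node \<Rightarrow> real" where
  "act_prob u w = (if u = w then 1 else if (u, w) \<in> E then p (u, w) else 0)"

lemma act_prob_range: "0 \<le> act_prob u w \<and> act_prob u w \<le> 1"
  unfolding act_prob_def using edge_prob_range by auto

lemma finite_nodes: "finite (L \<union> R)"
  using finite_L finite_R by simp

sublocale weighted_coverage "L \<union> R" act_prob
  using finite_nodes act_prob_range by unfold_locales auto

lemma expect_card:
  assumes "\<And>\<phi>. \<phi> \<subseteq> E \<Longrightarrow> A \<phi> \<subseteq> L \<union> R"
  shows "expect (\<lambda>\<phi>. real (card (A \<phi>))) = (\<Sum>w\<in>L \<union> R. expect (\<lambda>\<phi>. of_bool (w \<in> A \<phi>)))"
proof -
  have "real (card (A \<phi>)) = (\<Sum>w\<in>L \<union> R. of_bool (w \<in> A \<phi>))" if "\<phi> \<subseteq> E" for \<phi>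
    using assms[OF that] finite_nodes by (simp add: Int_absorb2 Int_commute)
  then show ?thesis by (simp add: expect_cong[of _ "\<lambda>\<phi>. \<Sum>w\<in>L \<union> R. of_bool (w \<in> A \<phi>)"] expect_sum)
qed

lemma prob_reach:
  assumes S: "S \<subseteq> L \<union> R"
  shows "expect (\<lambda>\<phi>. of_bool (w \<in> reach S \<phi>)) = 1 - (\<Prod>u\<in>S. 1 - act_prob u w)"
proof (cases "w \<in> S")
  case True
  have "finite S" using S finite_nodes finite_subset by blast
  then have "(\<Prod>u\<in>S. 1 - act_prob u w) = 0"
    using True by (intro prod_zero) (auto simp: act_prob_def)
  moreover have "expect (\<lambda>\<phi>. of_bool (w \<in> reach S \<phi>)) = 1"
    using True by (subst expect_cong[of _ "\<lambda>_. 1"]) (auto simp: reach_eq)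
  ultimately show ?thesis by simp
next
  case False
  define F where "F = {e \<in> E. fst e \<in> S \<and> snd e = w}"
  have "F \<subseteq> E" unfolding F_def by auto
  have "expect (\<lambda>\<phi>. of_bool (w \<in> reach S \<phi>)) = expect (\<lambda>\<phi>. 1 - of_bool (\<phi> \<inter> F = {}))"
  proof (rule expect_cong)
    fix \<phi> assume "\<phi> \<subseteq> E"
    then have "w \<in> reach S \<phi> \<longleftrightarrow> \<phi> \<inter> F \<noteq> {}"
      using reach_eq[of \<phi> S] False unfolding F_def by force
    then show "of_bool (w \<in> reach S \<phi>) = 1 - (of_bool (\<phi> \<inter> F = {}) :: real)" by simp
  qed
  also have "\<dots> = 1 - (\<Prod>e\<in>F. 1 - p e)"
    by (simp add: expect_diff prob_avoid[OF \<open>F \<subseteq> E\<close>])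
  also have "(\<Prod>e\<in>F. 1 - p e) = (\<Prod>u\<in>S. 1 - act_prob u w)"
  proof -
    have "finite S" using S finite_nodes finite_subset by blast
    have "F = (\<lambda>u. (u, w)) ` {u \<in> S. (u, w) \<in> E}" unfolding F_def by force
    then have "(\<Prod>e\<in>F. 1 - p e) = (\<Prod>u\<in>{u \<in> S. (u, w) \<in> E}. 1 - p (u, w))"
      by (simp add: prod.reindex inj_on_def)
    also have "\<dots> = (\<Prod>u\<in>S. if (u, w) \<in> E then 1 - p (u, w) else 1)"
      by (rule prod.inter_filter[OF \<open>finite S\<close>])
    also have "\<dots> = (\<Prod>u\<in>S. 1 - act_prob u w)"
      using False by (intro prod.cong) (auto simp: act_prob_def)
    finally show ?thesis .
  qed
  finally show ?thesis .
qed

lemma sigma_eq: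
  assumes "S \<subseteq> L \<union> R"
  shows "sigma E p S = (\<Sum>w\<in>L \<union> R. 1 - (\<Prod>u\<in>S. 1 - act_prob u w))"
  using assms reach_subset prob_reach by (simp add: sigma_expect expect_card)

lemma policy_seeds_subset: "\<pi> \<in> policies L R E k \<Longrightarrow> \<phi> \<subseteq> E \<Longrightarrow> policy_seeds \<pi> \<phi> \<subseteq> L \<union> R"
  unfolding policies_def by auto

lemma sum_seed_prob_le:
  assumes "\<pi> \<in> policies L R E k"
  shows "(\<Sum>u\<in>L \<union> R. seed_prob \<pi> u) \<le> real k"
proof -
  have "(\<Sum>u\<in>L \<union> R. seed_prob \<pi> u) = expect (\<lambda>\<phi>. real (card (policy_seeds \<pi> \<phi>)))"
    unfolding seed_prob_def using policy_seeds_subset[OF assms] by (simp add: expect_card)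
  also have "\<dots> \<le> expect (\<lambda>_. real k)"
    using assms by (intro expect_mono) (auto simp: policies_def)
  finally show ?thesis by simp
qed

text \<open>Union bound over the seeds that could activate \<open>w\<close>; a seed's out-edges are
  independent of its being selected.\<close>

lemma prob_reach_policy_le:
  assumes "\<pi> \<in> policies L R E k"
  shows "expect (\<lambda>\<phi>. of_bool (w \<in> reach (policy_seeds \<pi> \<phi>) \<phi>))
    \<le> (\<Sum>u\<in>L \<union> R. seed_prob \<pi> u * act_prob u w)"
proof -
  let ?V = "policy_seeds \<pi>"
  let ?hit = "\<lambda>u \<phi>. of_bool (u \<in> ?V \<phi>) * of_bool (u = w \<or> (u, w) \<in> \<phi>) :: real"
  have "expect (\<lambda>\<phi>. of_bool (w \<in> reach (?V \<phi>) \<phi>)) \<le> expect (\<lambda>\<phi>. \<Sum>u\<in>L \<union> R. ?hit u \<phi>)"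
  proof (rule expect_mono)
    fix \<phi> assume \<phi>: "\<phi> \<subseteq> E"
    show "of_bool (w \<in> reach (?V \<phi>) \<phi>) \<le> (\<Sum>u\<in>L \<union> R. ?hit u \<phi>)"
    proof (cases "w \<in> reach (?V \<phi>) \<phi>")
      case True
      then obtain u where u: "u \<in> ?V \<phi>" "u = w \<or> (u, w) \<in> \<phi>" using reach_eq[OF \<phi>] by auto
      then have "u \<in> L \<union> R" using policy_seeds_subset[OF assms \<phi>] by auto
      then have "?hit u \<phi> \<le> (\<Sum>u\<in>L \<union> R. ?hit u \<phi>)"
        by (intro member_le_sum) (use finite_nodes in auto)
      moreover have "?hit u \<phi> = 1" using u by auto
      ultimately have "1 \<le> (\<Sum>u\<in>L \<union> R. ?hit u \<phi>)" by linarith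
      then show ?thesis using True by simp
    qed (simp add: sum_nonneg)
  qed
  also have "\<dots> = (\<Sum>u\<in>L \<union> R. seed_prob \<pi> u * act_prob u w)"
  proof (subst expect_sum, intro sum.cong refl)
    fix u
    consider "u = w" | "u \<noteq> w" "(u, w) \<in> E" | "u \<noteq> w" "(u, w) \<notin> E" by blast
    then show "expect (?hit u) = seed_prob \<pi> u * act_prob u w"
    proof cases
      case 1
      then show ?thesis by (simp add: act_prob_def seed_prob_def)
    next
      case 2
      then show ?thesis using prob_seed_and_edge_live[of u w \<pi>] by (simp add: act_prob_def)
    next
      case 3
      then have "expect (?hit u) = expect (\<lambda>_. 0)" by (intro expect_cong) auto
      then show ?thesis using 3 by (simp add: act_prob_def)
    qed
  qed
  finally show ?thesis .
qed

lemma sigma_pol_le_min_sum: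
  assumes "\<pi> \<in> policies L R E k"
  shows "sigma_pol E p \<pi> \<le> (\<Sum>w\<in>L \<union> R. min 1 (\<Sum>u\<in>L \<union> R. seed_prob \<pi> u * act_prob u w))"
proof -
  have "sigma_pol E p \<pi> = (\<Sum>w\<in>L \<union> R. expect (\<lambda>\<phi>. of_bool (w \<in> reach (policy_seeds \<pi> \<phi>) \<phi>)))"
    unfolding sigma_pol_expect using reach_subset policy_seeds_subset[OF assms]
      by (simp add: expect_card)
  also have "\<dots> \<le> (\<Sum>w\<in>L \<union> R. min 1 (\<Sum>u\<in>L \<union> R. seed_prob \<pi> u * act_prob u w))"
    using prob_reach_policy_le[OF assms] expect_of_bool_bounds by (intro sum_mono) simp
  finally show ?thesis .
qed

lemma finite_sigma_values: "finite {sigma E p S | S. S \<subseteq> L \<union> R \<and> card S \<le> k}"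
  by (rule finite_subset[of _ "sigma E p ` Pow (L \<union> R)"]) (use finite_nodes in auto)

lemma sigma_le_OPT_N: "S \<subseteq> L \<union> R \<Longrightarrow> card S \<le> k \<Longrightarrow> sigma E p S \<le> OPT_N L R E p k"
  unfolding OPT_N_def by (rule Max_ge[OF finite_sigma_values]) auto

lemma OPT_N_nonneg: "0 \<le> OPT_N L R E p k"
  using sigma_le_OPT_N[of "{}" k] by (simp add: sigma_def reach_def)

lemma OPT_N_le: "(\<And>S. S \<subseteq> L \<union> R \<Longrightarrow> card S \<le> k \<Longrightarrow> sigma E p S \<le> B) \<Longrightarrow> OPT_N L R E p k \<le> B"
  unfolding OPT_N_def using finite_sigma_values by (subst Max_le_iff) auto

lemma sigma_pol_le_OPT_N:
  assumes "\<pi> \<in> policies L R E k"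
  shows "(1 - exp (-1)) * sigma_pol E p \<pi> \<le> OPT_N L R E p k"
proof -
  obtain S where S: "S \<subseteq> L \<union> R" "card S \<le> k"
    and round: "(1 - exp (-1)) * (\<Sum>w\<in>L \<union> R. min 1 (\<Sum>u\<in>L \<union> R. seed_prob \<pi> u * act_prob u w))
      \<le> (\<Sum>w\<in>L \<union> R. 1 - (\<Prod>u\<in>S. 1 - act_prob u w))"
    using exists_set_coverage_ge[of "seed_prob \<pi>" k] seed_prob_bounds sum_seed_prob_le[OF assms]
    by blast
  have "(1 - exp (-1)) * sigma_pol E p \<pi>
      \<le> (1 - exp (-1)) * (\<Sum>w\<in>L \<union> R. min 1 (\<Sum>u\<in>L \<union> R. seed_prob \<pi> u * act_prob u w))"
    using sigma_pol_le_min_sum[OF assms] by (intro mult_left_mono) auto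
  also have "\<dots> \<le> sigma E p S" using round sigma_eq[OF S(1)] by simp
  also have "\<dots> \<le> OPT_N L R E p k" by (rule sigma_le_OPT_N[OF S])
  finally show ?thesis .
qed

lemma null_policy_in_policies: "(\<lambda>_. None) \<in> policies L R E k"
proof -
  have "seeds_seq (\<lambda>_. None) \<phi> n = []" for \<phi> n by (induction n) auto
  then show ?thesis unfolding policies_def policy_seeds_def by simp
qed

lemma sigma_pol_le_card: "\<pi> \<in> policies L R E k \<Longrightarrow> sigma_pol E p \<pi> \<le> real (card (L \<union> R))"
  unfolding sigma_pol_expect using reach_subset policy_seeds_subset finite_nodes
  by (subst expect_const[symmetric], intro expect_mono) (simp add: card_mono)

lemma sigma_pol_le_OPT_A: "\<pi> \<in> policies L R E k \<Longrightarrow> sigma_pol E p \<pi> \<le> OPT_A L R E p k"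
  unfolding OPT_A_def using sigma_pol_le_card by (intro cSup_upper bdd_aboveI2) auto

lemma OPT_A_le_OPT_N: "(1 - exp (-1)) * OPT_A L R E p k \<le> OPT_N L R E p k"
proof -
  have "OPT_A L R E p k \<le> OPT_N L R E p k / (1 - exp (-1))"
    unfolding OPT_A_def using null_policy_in_policies sigma_pol_le_OPT_N
    by (intro cSup_least) (auto simp: pos_le_divide_eq mult.commute)
  then show ?thesis by (simp add: pos_le_divide_eq mult.commute)
qed

lemma ratio_le: "OPT_A L R E p k / OPT_N L R E p k \<le> exp 1 / (exp 1 - 1)"
proof -
  have "exp 1 / (exp 1 - 1) = 1 / (1 - exp (-1::real))"
    by (simp add: exp_minus field_simps)
  then show ?thesis
    using OPT_A_le_OPT_N[of k] OPT_N_nonneg[of k]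
    by (cases "OPT_N L R E p k = 0") (auto simp: divide_le_eq pos_le_divide_eq mult.commute)
qed

end

section \<open>Instances approaching the bound\<close>

lemma in_takeWhile_neq_iff:
  assumes "distinct xs" "a \<in> set xs" "b \<in> set xs" "a \<noteq> b"
  shows "a \<in> set (takeWhile (\<lambda>x. x \<noteq> b) xs) \<longleftrightarrow> b \<notin> set (takeWhile (\<lambda>x. x \<noteq> a) xs)"
  using assms by (induction xs) auto

text \<open>Jensen's inequality for the concave function \<open>x \<mapsto> 1 - b powr x\<close>, via its tangent
  at the mean.\<close>

lemma sum_one_minus_powr_le:
  fixes b c :: real and x :: "'a \<Rightarrow> real"
  assumes b: "0 < b" "b < 1" and R: "finite R" "0 < card R" and sum_le: "(\<Sum>w\<in>R. x w) \<le> c"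
  shows "(\<Sum>w\<in>R. 1 - b powr x w) \<le> real (card R) * (1 - b powr (c / real (card R)))"
proof -
  define a where "a = c / real (card R)"
  define Q where "Q = b powr a"
  have "0 < Q" "ln b < 0" unfolding Q_def using b by auto
  have tangent: "1 - b powr y \<le> 1 - Q - Q * ln b * (y - a)" for y
  proof -
    have "exp (a * ln b) * (1 + (y * ln b - a * ln b)) \<le> exp (a * ln b) * exp (y * ln b - a * ln b)"
      by (intro mult_left_mono exp_ge_add_one_self) auto
    then show ?thesis unfolding Q_def powr_def using b by (simp add: exp_diff algebra_simps)
  qed
  have "(\<Sum>w\<in>R. 1 - b powr x w) \<le> (\<Sum>w\<in>R. 1 - Q - Q * ln b * (x w - a))"
    by (intro sum_mono tangent)
  also have "\<dots> = (\<Sum>w\<in>R. (1 - Q + Q * ln b * a) - Q * ln b * x w)"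
    by (intro sum.cong) (simp_all add: algebra_simps)
  also have "\<dots> = real (card R) * (1 - Q + Q * ln b * a) - Q * ln b * (\<Sum>w\<in>R. x w)"
    by (simp add: sum_subtractf sum_distrib_left)
  also have "\<dots> = real (card R) * (1 - Q) - Q * ln b * ((\<Sum>w\<in>R. x w) - c)"
    using R unfolding a_def by (auto simp: algebra_simps)
  also have "\<dots> \<le> real (card R) * (1 - Q)"
  proof -
    have "Q * ln b \<le> 0" using \<open>0 < Q\<close> \<open>ln b < 0\<close> by (simp add: mult_pos_neg less_imp_le)
    then show ?thesis using mult_nonpos_nonpos[of "Q * ln b" "(\<Sum>w\<in>R. x w) - c"] sum_le by simp
  qed
  finally show ?thesis unfolding Q_def a_def .
qed

text \<open>Assumption \<open>rich\<close> ensures that the greedy policy below never gets stuck while it has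
  fewer than \<open>k\<close> seeds and at least \<open>D\<close> right nodes are still inactive.\<close>

locale rich_instance = bip_influence_graph L R E p for L R E p +
  fixes nbr :: "node \<Rightarrow> node set" and D k m :: nat and q :: real
  assumes edges_eq: "E = {(u, w). u \<in> L \<and> w \<in> nbr u}"
    and uniform_prob: "p = (\<lambda>_. q)"
    and nbr_subset: "\<And>u. u \<in> L \<Longrightarrow> nbr u \<subseteq> R"
    and card_nbr: "\<And>u. u \<in> L \<Longrightarrow> card (nbr u) = D"
    and card_R: "card R = m"
    and rich: "\<And>U X. U \<subseteq> R \<Longrightarrow> D \<le> card U \<Longrightarrow> finite X \<Longrightarrow> card X < k \<Longrightarrow>
      \<exists>u\<in>L. u \<notin> X \<and> nbr u \<subseteq> U"
begin

text \<open>\<open>snd ` obs\<close> is the set of right nodes activated so far.\<close>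

definition greedy :: policy where
  "greedy = (\<lambda>(xs, obs). if length xs < k \<and> D \<le> card (R - snd ` obs)
      then Some (SOME u. u \<in> L \<and> u \<notin> set xs \<and> nbr u \<subseteq> R - snd ` obs) else None)"

definition greedy_seeds :: "edge set \<Rightarrow> node list" where
  "greedy_seeds \<phi> = seeds_seq greedy \<phi> k"

definition valid_run :: "edge set \<Rightarrow> node list \<Rightarrow> bool" where
  "valid_run \<phi> xs \<longleftrightarrow> distinct xs \<and> set xs \<subseteq> L \<and> length xs \<le> k \<and>
     (\<forall>u\<in>set xs. \<forall>u'\<in>set xs. u \<noteq> u' \<longrightarrow> \<phi> `` {u} \<inter> \<phi> `` {u'} = {})"

lemma live_Image_subset_nbr: "\<phi> \<subseteq> E \<Longrightarrow> \<phi> `` {u} \<subseteq> nbr u"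
  using edges_eq by auto

lemma seeds_seq_greedy_Suc:
  assumes "\<phi> \<subseteq> E"
  shows "seeds_seq greedy \<phi> (Suc n) =
   (let xs = seeds_seq greedy \<phi> n; U = R - \<phi> `` set xs in
    if length xs < k \<and> D \<le> card U then xs @ [SOME u. u \<in> L \<and> u \<notin> set xs \<and> nbr u \<subseteq> U] else xs)"
proof -
  have "snd ` observed xs \<phi> = \<phi> `` set xs" for xs
    unfolding observed_eq[OF assms] by force
  then show ?thesis by (simp add: greedy_def Let_def)
qed

lemma valid_run_greedy:
  assumes \<phi>: "\<phi> \<subseteq> E"
  shows "valid_run \<phi> (seeds_seq greedy \<phi> n)"
proof (induction n)
  case 0
  then show ?case unfolding valid_run_def by simp
next
  case (Suc n)
  let ?xs = "seeds_seq greedy \<phi> n"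
  let ?U = "R - \<phi> `` set ?xs"
  show ?case
  proof (cases "length ?xs < k \<and> D \<le> card ?U")
    case True
    have "\<exists>u\<in>L. u \<notin> set ?xs \<and> nbr u \<subseteq> ?U"
      using True Suc.IH by (intro rich) (auto simp: valid_run_def distinct_card)
    then have "\<exists>u. u \<in> L \<and> u \<notin> set ?xs \<and> nbr u \<subseteq> ?U" by blast
    define x where "x = (SOME u. u \<in> L \<and> u \<notin> set ?xs \<and> nbr u \<subseteq> ?U)"
    have x: "x \<in> L" "x \<notin> set ?xs" "nbr x \<subseteq> ?U"
      using someI_ex[OF \<open>\<exists>u. _\<close>] unfolding x_def by auto
    have step: "seeds_seq greedy \<phi> (Suc n) = ?xs @ [x]"
      using seeds_seq_greedy_Suc[OF \<phi>, of n] True unfolding x_def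
        by (simp add: Let_def del: seeds_seq.simps)
    have "\<phi> `` {x} \<inter> \<phi> `` {u'} = {}" if "u' \<in> set ?xs" for u'
      using live_Image_subset_nbr[OF \<phi>, of x] x(3) that by blast
    then show ?thesis unfolding step using Suc.IH True x unfolding valid_run_def
      by (auto simp: Int_commute)
  next
    case False
    then have "seeds_seq greedy \<phi> (Suc n) = ?xs"
      using seeds_seq_greedy_Suc[OF \<phi>, of n] by (simp add: Let_def del: seeds_seq.simps)
    then show ?thesis using Suc.IH by (simp del: seeds_seq.simps)
  qed
qed

lemma greedy_stalls:
  assumes \<phi>: "\<phi> \<subseteq> E"
  shows "seeds_seq greedy \<phi> (Suc k) = seeds_seq greedy \<phi> k"
  using seeds_seq_stalled_or_full[of greedy \<phi> k] seeds_seq_greedy_Suc[OF \<phi>, of k]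
  by (auto simp: Let_def)

lemma policy_seeds_greedy: "\<phi> \<subseteq> E \<Longrightarrow> policy_seeds greedy \<phi> = set (greedy_seeds \<phi>)"
  unfolding greedy_seeds_def by (rule policy_seeds_stalled[OF greedy_stalls])

lemma valid_greedy_seeds: "\<phi> \<subseteq> E \<Longrightarrow> valid_run \<phi> (greedy_seeds \<phi>)"
  unfolding greedy_seeds_def by (rule valid_run_greedy)

lemma greedy_seeds_short:
  assumes \<phi>: "\<phi> \<subseteq> E" and "length (greedy_seeds \<phi>) < k"
  shows "card (R - \<phi> `` set (greedy_seeds \<phi>)) < D"
  using assms greedy_stalls[OF \<phi>] seeds_seq_greedy_Suc[OF \<phi>, of k]
  unfolding greedy_seeds_def by (auto simp: Let_def split: if_splits)

lemma greedy_in_policies: "greedy \<in> policies L R E k"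
  unfolding policies_def
proof (intro CollectI ballI)
  fix \<phi> assume "\<phi> \<in> Pow E"
  then have "valid_run \<phi> (greedy_seeds \<phi>)" "policy_seeds greedy \<phi> = set (greedy_seeds \<phi>)"
    using valid_greedy_seeds policy_seeds_greedy by auto
  then show "policy_seeds greedy \<phi> \<subseteq> L \<union> R \<and> finite (policy_seeds greedy \<phi>)
      \<and> card (policy_seeds greedy \<phi>) \<le> k"
    unfolding valid_run_def by (auto simp: distinct_card)
qed

definition selected :: "node \<Rightarrow> edge set \<Rightarrow> real" where
  "selected u \<phi> = of_bool (u \<in> policy_seeds greedy \<phi>)"

definition selected_before :: "node \<Rightarrow> node \<Rightarrow> edge set \<Rightarrow> real" where
  "selected_before u u' \<phi> =
     of_bool (u' \<in> set (greedy_seeds \<phi>) \<and> u \<in> set (takeWhile (\<lambda>x. x \<noteq> u') (greedy_seeds \<phi>)))"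

definition live_degree :: "node \<Rightarrow> edge set \<Rightarrow> real" where
  "live_degree u \<phi> = real (card (\<phi> `` {u}))"

definition mean_degree :: real where
  "mean_degree = q * real D"

definition deviation :: "edge set \<Rightarrow> real" where
  "deviation \<phi> = (\<Sum>u\<in>L. selected u \<phi> * (live_degree u \<phi> - mean_degree))"

lemma finite_nbr: "u \<in> L \<Longrightarrow> finite (nbr u)"
  using nbr_subset finite_R finite_subset by blast

lemma live_degree_eq_sum:
  assumes "\<phi> \<subseteq> E" "u \<in> L"
  shows "live_degree u \<phi> = (\<Sum>w\<in>nbr u. of_bool ((u, w) \<in> \<phi>))"
proof -
  have "nbr u \<inter> {w. (u, w) \<in> \<phi>} = \<phi> `` {u}" using live_Image_subset_nbr[OF assms(1)] by auto
  then show ?thesis unfolding live_degree_def using finite_nbr[OF assms(2)] by simp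
qed

lemma live_degree_bounds: "\<phi> \<subseteq> E \<Longrightarrow> u \<in> L \<Longrightarrow> 0 \<le> live_degree u \<phi> \<and> live_degree u \<phi> \<le> real D"
  unfolding live_degree_def using card_mono[OF finite_nbr live_Image_subset_nbr] card_nbr by force

lemma expect_live_degree:
  assumes "u \<in> L"
  shows "expect (live_degree u) = mean_degree"
proof -
  have "expect (live_degree u) = (\<Sum>w\<in>nbr u. expect (\<lambda>\<phi>. of_bool ((u, w) \<in> \<phi>)))"
    using live_degree_eq_sum[OF _ assms] by (simp add: expect_cong[of "live_degree u"] expect_sum)
  also have "\<dots> = (\<Sum>w\<in>nbr u. q)"
  proof (intro sum.cong refl)
    fix w assume "w \<in> nbr u"
    then have "(u, w) \<in> E" using assms edges_eq by auto
    then show "expect (\<lambda>\<phi>. of_bool ((u, w) \<in> \<phi>)) = q" using prob_edge_live uniform_prob by simp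
  qed
  finally show ?thesis unfolding mean_degree_def using card_nbr[OF assms] by simp
qed

lemma variance_live_degree_le:
  assumes "u \<in> L"
  shows "expect (\<lambda>\<phi>. (live_degree u \<phi> - mean_degree)\<^sup>2) \<le> real D * mean_degree"
proof -
  have "expect (\<lambda>\<phi>. (live_degree u \<phi> - mean_degree)\<^sup>2)
      = expect (\<lambda>\<phi>. ((live_degree u \<phi>)\<^sup>2 - 2 * mean_degree * live_degree u \<phi>) + mean_degree\<^sup>2)"
    by (intro expect_cong) (simp add: power2_diff)
  also have "\<dots> = expect (\<lambda>\<phi>. (live_degree u \<phi>)\<^sup>2) - 2 * mean_degree * mean_degree + mean_degree\<^sup>2"
    by (simp only: expect_add expect_diff expect_scale expect_const expect_live_degree[OF assms])
  also have "\<dots> = expect (\<lambda>\<phi>. (live_degree u \<phi>)\<^sup>2) - mean_degree\<^sup>2"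
    by (simp add: power2_eq_square)
  also have "\<dots> \<le> expect (\<lambda>\<phi>. real D * live_degree u \<phi>)"
    using live_degree_bounds[OF _ assms]
    by (smt (verit) expect_mono mult_right_mono power2_eq_square zero_le_power2)
  also have "\<dots> = real D * mean_degree"
    by (simp add: expect_scale expect_live_degree[OF assms])
  finally show ?thesis .
qed

lemma live_degree_restrict: "\<phi> \<subseteq> E \<Longrightarrow> live_degree u \<phi> = live_degree u (\<phi> \<inter> out_edges u)"
  unfolding live_degree_def out_edges_def by (rule arg_cong[where f = "\<lambda>A. real (card A)"]) auto

lemma live_degree_remove_out_edges: "u \<noteq> u' \<Longrightarrow> live_degree u (\<phi> - out_edges u') = live_degree u \<phi>"
  unfolding live_degree_def out_edges_def by (rule arg_cong[where f = "\<lambda>A. real (card A)"]) auto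

lemma selected_remove_out_edges: "\<phi> \<subseteq> E \<Longrightarrow> selected u (\<phi> - out_edges u) = selected u \<phi>"
  unfolding selected_def using policy_seeds_remove_out_edges by simp

lemma selected_before_remove_out_edges:
  "\<phi> \<subseteq> E \<Longrightarrow> selected_before u u' (\<phi> - out_edges u') = selected_before u u' \<phi>"
  using takeWhile_seeds_seq_remove_out_edges[of \<phi> u' greedy k]
  unfolding selected_before_def greedy_seeds_def by simp

lemma selected_mult_selected:
  assumes \<phi>: "\<phi> \<subseteq> E" and "u \<noteq> u'"
  shows "selected u \<phi> * selected u' \<phi> = selected_before u u' \<phi> + selected_before u' u \<phi>"
proof -
  have "distinct (greedy_seeds \<phi>)" using valid_greedy_seeds[OF \<phi>] unfolding valid_run_def by blast
  then show ?thesis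
    using in_takeWhile_neq_iff[of "greedy_seeds \<phi>" u u'] \<open>u \<noteq> u'\<close>
    unfolding selected_def selected_before_def policy_seeds_greedy[OF \<phi>]
    by (auto dest: set_takeWhileD)
qed

lemma expect_selected_live_degree:
  assumes "u \<in> L"
  shows "expect (\<lambda>\<phi>. selected u \<phi> * live_degree u \<phi>) = seed_prob greedy u * mean_degree"
  using expect_mult_indep[OF out_edges_subset, of "selected u" u "live_degree u"]
    selected_remove_out_edges live_degree_restrict expect_live_degree[OF assms]
  unfolding seed_prob_def selected_def[symmetric] by simp

lemma expect_selected_sq_deviation_le:
  assumes "u \<in> L"
  shows "expect (\<lambda>\<phi>. selected u \<phi> * (live_degree u \<phi> - mean_degree)\<^sup>2)
    \<le> seed_prob greedy u * (real D * mean_degree)"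
proof -
  have "expect (\<lambda>\<phi>. selected u \<phi> * (live_degree u \<phi> - mean_degree)\<^sup>2)
      = seed_prob greedy u * expect (\<lambda>\<phi>. (live_degree u \<phi> - mean_degree)\<^sup>2)"
    using expect_mult_indep[OF out_edges_subset,
        of "selected u" u "\<lambda>\<phi>. (live_degree u \<phi> - mean_degree)\<^sup>2"]
      selected_remove_out_edges live_degree_restrict
    unfolding seed_prob_def selected_def[symmetric] by simp
  then show ?thesis
    using variance_live_degree_le[OF assms] seed_prob_bounds by (simp add: mult_left_mono)
qed

text \<open>Whether \<open>u\<close> was selected before \<open>u'\<close> does not depend on the out-edges of \<open>u'\<close>,
  and the live degree of \<open>u'\<close> has mean \<open>mean_degree\<close>: a martingale-difference argument.\<close>

lemma expect_cross_term:
  assumes "u' \<in> L" and "u \<noteq> u'"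
  shows "expect (\<lambda>\<phi>. selected_before u u' \<phi> * (live_degree u \<phi> - mean_degree)
    * (live_degree u' \<phi> - mean_degree)) = 0"
proof -
  have "expect (\<lambda>\<phi>. (selected_before u u' \<phi> * (live_degree u \<phi> - mean_degree))
      * (live_degree u' \<phi> - mean_degree))
    = expect (\<lambda>\<phi>. selected_before u u' \<phi> * (live_degree u \<phi> - mean_degree))
      * expect (\<lambda>\<phi>. live_degree u' \<phi> - mean_degree)"
    using selected_before_remove_out_edges live_degree_remove_out_edges[OF assms(2)]
      live_degree_restrict[where u = u']
    by (intro expect_mult_indep[OF out_edges_subset]) auto
  moreover have "expect (\<lambda>\<phi>. live_degree u' \<phi> - mean_degree) = 0"
    by (simp add: expect_diff expect_live_degree[OF assms(1)])
  ultimately show ?thesis by simp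
qed

lemma expect_deviation_product:
  assumes "u \<in> L" "u' \<in> L"
  shows "expect (\<lambda>\<phi>. selected u \<phi> * (live_degree u \<phi> - mean_degree)
      * (selected u' \<phi> * (live_degree u' \<phi> - mean_degree)))
    = (if u = u' then expect (\<lambda>\<phi>. selected u \<phi> * (live_degree u \<phi> - mean_degree)\<^sup>2) else 0)"
proof (cases "u = u'")
  case True
  then show ?thesis
    by (simp, intro expect_cong) (simp add: selected_def power2_eq_square)
next
  case False
  have "expect (\<lambda>\<phi>. selected u \<phi> * (live_degree u \<phi> - mean_degree)
      * (selected u' \<phi> * (live_degree u' \<phi> - mean_degree)))
    = expect (\<lambda>\<phi>.
        selected_before u u' \<phi> * (live_degree u \<phi> - mean_degree) * (live_degree u' \<phi> - mean_degree)
      + selected_before u' u \<phi> * (live_degree u' \<phi> - mean_degree) * (live_degree u \<phi> - mean_degree))"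
    using selected_mult_selected[OF _ False] by (intro expect_cong) (simp add: algebra_simps)
  also have "\<dots> = 0"
    using expect_cross_term[OF assms(2) False] expect_cross_term[OF assms(1)] False
    by (simp add: expect_add)
  finally show ?thesis using False by simp
qed

lemma expect_deviation_sq_le:
  "expect (\<lambda>\<phi>. (deviation \<phi>)\<^sup>2) \<le> real D * mean_degree * (\<Sum>u\<in>L. seed_prob greedy u)"
proof -
  have "expect (\<lambda>\<phi>. (deviation \<phi>)\<^sup>2)
      = (\<Sum>u\<in>L. expect (\<lambda>\<phi>. selected u \<phi> * (live_degree u \<phi> - mean_degree)\<^sup>2))"
    unfolding deviation_def power2_eq_square[of "sum _ _"] sum_product
    using finite_L
      by (simp add: expect_sum expect_deviation_product if_distrib sum.delta cong: sum.cong)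
  also have "\<dots> \<le> (\<Sum>u\<in>L. seed_prob greedy u * (real D * mean_degree))"
    by (intro sum_mono expect_selected_sq_deviation_le)
  also have "\<dots> = real D * mean_degree * (\<Sum>u\<in>L. seed_prob greedy u)"
    by (simp add: sum_distrib_left mult.commute)
  finally show ?thesis .
qed

definition num_seeds :: "edge set \<Rightarrow> real" where
  "num_seeds \<phi> = real (card (policy_seeds greedy \<phi>))"

definition slack :: real where
  "slack = real m - real D - mean_degree * real k"

lemma policy_seeds_greedy_subset: "\<phi> \<subseteq> E \<Longrightarrow> policy_seeds greedy \<phi> \<subseteq> L"
  using valid_greedy_seeds policy_seeds_greedy unfolding valid_run_def by auto

lemma num_seeds_eq_sum: "\<phi> \<subseteq> E \<Longrightarrow> num_seeds \<phi> = (\<Sum>u\<in>L. selected u \<phi>)"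
  unfolding num_seeds_def selected_def using policy_seeds_greedy_subset finite_L
  by (simp add: Int_absorb1)

lemma num_seeds_bounds: "\<phi> \<subseteq> E \<Longrightarrow> 0 \<le> num_seeds \<phi> \<and> num_seeds \<phi> \<le> real k"
  using greedy_in_policies unfolding policies_def num_seeds_def by auto

lemma expect_num_seeds: "expect num_seeds = (\<Sum>u\<in>L. seed_prob greedy u)"
  unfolding seed_prob_def selected_def[symmetric]
  by (simp add: expect_cong[OF num_seeds_eq_sum] expect_sum)

lemma card_live_image_greedy:
  assumes \<phi>: "\<phi> \<subseteq> E"
  shows "real (card (\<phi> `` policy_seeds greedy \<phi>)) = (\<Sum>u\<in>L. selected u \<phi> * live_degree u \<phi>)"
proof -
  let ?S = "policy_seeds greedy \<phi>"
  have disjoint: "\<forall>u\<in>?S. \<forall>u'\<in>?S. u \<noteq> u' \<longrightarrow> \<phi> `` {u} \<inter> \<phi> `` {u'} = {}"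
    using valid_greedy_seeds[OF \<phi>] policy_seeds_greedy[OF \<phi>] unfolding valid_run_def by simp
  have "finite ?S" using policy_seeds_greedy[OF \<phi>] by simp
  moreover have "finite (\<phi> `` {u})" for u
    using finite_subset[OF \<phi> finite_edges] by (simp add: finite_Image)
  ultimately have "card (\<Union>u\<in>?S. \<phi> `` {u}) = (\<Sum>u\<in>?S. card (\<phi> `` {u}))"
    using disjoint by (intro card_UN_disjoint) auto
  moreover have "\<phi> `` ?S = (\<Union>u\<in>?S. \<phi> `` {u})" by auto
  ultimately have "real (card (\<phi> `` ?S)) = (\<Sum>u\<in>?S. live_degree u \<phi>)"
    unfolding live_degree_def by simp
  also have "\<dots> = (\<Sum>u\<in>L. selected u \<phi> * live_degree u \<phi>)"
    unfolding selected_def using policy_seeds_greedy_subset[OF \<phi>] finite_L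
    by (simp add: Int_absorb1 mult.commute)
  finally show ?thesis .
qed

lemma card_reach_greedy:
  assumes \<phi>: "\<phi> \<subseteq> E"
  shows "real (card (reach (policy_seeds greedy \<phi>) \<phi>))
    = num_seeds \<phi> + (\<Sum>u\<in>L. selected u \<phi> * live_degree u \<phi>)"
proof -
  let ?S = "policy_seeds greedy \<phi>"
  have "finite ?S" using policy_seeds_greedy[OF \<phi>] by simp
  moreover have "finite (\<phi> `` ?S)" using finite_subset[OF \<phi> finite_edges]
    by (simp add: finite_Image)
  moreover have "?S \<inter> \<phi> `` ?S = {}"
    using policy_seeds_greedy_subset[OF \<phi>] \<phi> edges_LR disjoint_LR by auto
  ultimately have "card (reach ?S \<phi>) = card ?S + card (\<phi> `` ?S)"
    unfolding reach_eq[OF \<phi>] by (rule card_Un_disjoint)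
  then show ?thesis using card_live_image_greedy[OF \<phi>] unfolding num_seeds_def by simp
qed

lemma sigma_pol_greedy: "sigma_pol E p greedy = (1 + mean_degree) * expect num_seeds"
proof -
  have "sigma_pol E p greedy
      = expect num_seeds + (\<Sum>u\<in>L. expect (\<lambda>\<phi>. selected u \<phi> * live_degree u \<phi>))"
    unfolding sigma_pol_expect
      by (simp add: expect_cong[OF card_reach_greedy] expect_add expect_sum)
  also have "\<dots> = expect num_seeds + (\<Sum>u\<in>L. seed_prob greedy u) * mean_degree"
    by (simp add: expect_selected_live_degree sum_distrib_right)
  finally show ?thesis by (simp add: expect_num_seeds algebra_simps)
qed

text \<open>A run that stops early has covered all but fewer than \<open>D\<close> right nodes, so the seeds
  must have far more live out-edges than expected.\<close>

lemma slack_less_deviation: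
  assumes \<phi>: "\<phi> \<subseteq> E" and "0 \<le> q" and short: "num_seeds \<phi> < real k"
  shows "slack < deviation \<phi>"
proof -
  let ?A = "\<phi> `` policy_seeds greedy \<phi>"
  have AR: "?A \<subseteq> R" using \<phi> edges_LR by auto
  have "length (greedy_seeds \<phi>) < k"
    using short valid_greedy_seeds[OF \<phi>] policy_seeds_greedy[OF \<phi>]
    unfolding num_seeds_def valid_run_def by (simp add: distinct_card)
  then have "card (R - ?A) < D"
    using greedy_seeds_short[OF \<phi>] policy_seeds_greedy[OF \<phi>] by simp
  moreover have "card (R - ?A) = m - card ?A"
    using card_Diff_subset[OF finite_subset[OF AR finite_R] AR] card_R by simp
  ultimately have "real m < real (card ?A) + real D" by linarith
  moreover have "real (card ?A) = deviation \<phi> + mean_degree * num_seeds \<phi>"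
    unfolding card_live_image_greedy[OF \<phi>] deviation_def num_seeds_eq_sum[OF \<phi>]
    by (simp add: algebra_simps sum.distrib sum_subtractf sum_distrib_left)
  moreover have "mean_degree * num_seeds \<phi> \<le> mean_degree * real k"
    using num_seeds_bounds[OF \<phi>] \<open>0 \<le> q\<close> by (intro mult_left_mono) (auto simp: mean_degree_def)
  ultimately show ?thesis unfolding slack_def by linarith
qed

lemma prob_short_run_le:
  assumes "0 \<le> q" and "0 < slack"
  shows "expect (\<lambda>\<phi>. of_bool (num_seeds \<phi> < real k)) \<le> real D * mean_degree * real k / slack\<^sup>2"
proof -
  have "expect (\<lambda>\<phi>. of_bool (num_seeds \<phi> < real k)) \<le> expect (\<lambda>\<phi>. (deviation \<phi>)\<^sup>2 / slack\<^sup>2)"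
  proof (rule expect_mono)
    fix \<phi> assume \<phi>: "\<phi> \<subseteq> E"
    show "of_bool (num_seeds \<phi> < real k) \<le> (deviation \<phi>)\<^sup>2 / slack\<^sup>2"
    proof (cases "num_seeds \<phi> < real k")
      case True
      then have "slack\<^sup>2 \<le> (deviation \<phi>)\<^sup>2"
        using slack_less_deviation[OF \<phi> assms(1)] assms(2) by (intro power_mono) auto
      then show ?thesis using True assms(2) by simp
    qed simp
  qed
  also have "\<dots> = expect (\<lambda>\<phi>. (deviation \<phi>)\<^sup>2) / slack\<^sup>2"
    using expect_scale[of "1 / slack\<^sup>2"] by simp
  also have "\<dots> \<le> real D * mean_degree * real k / slack\<^sup>2"
  proof (intro divide_right_mono order.trans[OF expect_deviation_sq_le] mult_left_mono)
    show "(\<Sum>u\<in>L. seed_prob greedy u) \<le> real k"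
      using expect_num_seeds num_seeds_bounds expect_mono[of num_seeds "\<lambda>_. real k"] by simp
  qed (use assms in \<open>auto simp: mean_degree_def\<close>)
  finally show ?thesis .
qed

lemma OPT_A_ge:
  assumes "0 \<le> q" and "0 < slack"
  shows "(1 + mean_degree) * real k * (1 - real D * mean_degree * real k / slack\<^sup>2)
    \<le> OPT_A L R E p k"
proof -
  have "real k * (1 - expect (\<lambda>\<phi>. of_bool (num_seeds \<phi> < real k))) \<le> expect num_seeds"
  proof -
    have "expect (\<lambda>\<phi>. real k - real k * of_bool (num_seeds \<phi> < real k)) \<le> expect num_seeds"
      using num_seeds_bounds by (intro expect_mono) auto
    then show ?thesis by (simp add: expect_diff expect_scale algebra_simps)
  qed
  then have "real k * (1 - real D * mean_degree * real k / slack\<^sup>2) \<le> expect num_seeds"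
    using prob_short_run_le[OF assms] by (smt (verit) mult_left_mono of_nat_0_le_iff)
  then have "(1 + mean_degree) * (real k * (1 - real D * mean_degree * real k / slack\<^sup>2))
      \<le> sigma_pol E p greedy"
    unfolding sigma_pol_greedy using assms(1) by (intro mult_left_mono) (auto simp: mean_degree_def)
  also have "\<dots> \<le> OPT_A L R E p k" by (rule sigma_pol_le_OPT_A[OF greedy_in_policies])
  finally show ?thesis by (simp add: mult.assoc)
qed

lemma act_prob_uniform: "act_prob u w = (if u = w then 1 else if (u, w) \<in> E then q else 0)"
  unfolding act_prob_def by (simp add: uniform_prob)

definition in_degree :: "node set \<Rightarrow> node \<Rightarrow> real" where
  "in_degree S w = real (card {u \<in> S. (u, w) \<in> E})"

lemma in_degree_left:
  assumes "w \<in> L"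
  shows "in_degree S w = 0"
proof -
  have "{u \<in> S. (u, w) \<in> E} = {}" using assms edges_LR disjoint_LR by auto
  then show ?thesis unfolding in_degree_def by (simp only: card.empty of_nat_0)
qed

lemma sum_in_degree_le:
  assumes "finite S"
  shows "(\<Sum>w\<in>R. in_degree S w) \<le> real D * real (card S)"
proof -
  have "(\<Sum>w\<in>R. in_degree S w) = (\<Sum>w\<in>R. \<Sum>u\<in>S. of_bool ((u, w) \<in> E))"
    unfolding in_degree_def using assms by (simp add: Int_def)
  also have "\<dots> = (\<Sum>u\<in>S. \<Sum>w\<in>R. of_bool ((u, w) \<in> E))" by (rule sum.swap)
  also have "\<dots> = (\<Sum>u\<in>S. real (card (E `` {u})))"
    using finite_R edges_LR
      by (intro sum.cong refl) (auto simp: Int_def intro!: arg_cong[where f = card])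
  also have "\<dots> \<le> (\<Sum>u\<in>S. real D)"
  proof (intro sum_mono)
    fix u
    show "real (card (E `` {u})) \<le> real D" using card_nbr edges_eq by (cases "u \<in> L") auto
  qed
  finally show ?thesis by (simp add: mult.commute)
qed

lemma prob_reach_le_uniform:
  assumes "finite S" and q: "0 < q" "q < 1"
  shows "1 - (\<Prod>u\<in>S. 1 - act_prob u w) \<le> of_bool (w \<in> S) + (1 - (1 - q) powr in_degree S w)"
proof (cases "w \<in> S")
  case True
  have "0 \<le> (\<Prod>u\<in>S. 1 - act_prob u w)"
    using act_prob_range by (intro prod_nonneg) simp
  moreover have "(1 - q) powr in_degree S w \<le> 1"
    using q by (intro powr_le1) (auto simp: in_degree_def)
  ultimately show ?thesis using True by simp
next
  case False
  have "(\<Prod>u\<in>S. 1 - act_prob u w) = (\<Prod>u\<in>S. if (u, w) \<in> E then 1 - q else 1)"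
    using False by (intro prod.cong) (auto simp: act_prob_uniform)
  also have "\<dots> = (1 - q) powr in_degree S w"
    using q assms(1) by (simp add: prod.If_cases powr_realpow in_degree_def Int_def)
  finally show ?thesis using False by simp
qed

lemma sigma_le_nonadaptive:
  assumes S: "S \<subseteq> L \<union> R" "card S \<le> k" and q: "0 < q" "q < 1" and "0 < m"
  shows "sigma E p S \<le> real k + real m * (1 - (1 - q) powr (real D * real k / real m))"
proof -
  have "finite S" using S finite_nodes finite_subset by blast
  have "sigma E p S \<le> (\<Sum>w\<in>L \<union> R. of_bool (w \<in> S) + (1 - (1 - q) powr in_degree S w))"
    unfolding sigma_eq[OF S(1)] by (intro sum_mono prob_reach_le_uniform[OF \<open>finite S\<close> q])
  also have "\<dots> = real (card S) + (\<Sum>w\<in>R. 1 - (1 - q) powr in_degree S w)"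
  proof -
    have "(\<Sum>w\<in>L \<union> R. of_bool (w \<in> S)) = real (card S)"
      using S(1) finite_nodes by (simp add: Int_absorb2 Int_commute)
    moreover have "(\<Sum>w\<in>L \<union> R. 1 - (1 - q) powr in_degree S w)
        = (\<Sum>w\<in>R. 1 - (1 - q) powr in_degree S w)"
      using finite_nodes in_degree_left q by (intro sum.mono_neutral_right) auto
    ultimately show ?thesis by (simp only: sum.distrib)
  qed
  also have "\<dots> \<le> real k + real m * (1 - (1 - q) powr (real D * real k / real m))"
  proof -
    have "(\<Sum>w\<in>R. in_degree S w) \<le> real D * real k"
      using sum_in_degree_le[OF \<open>finite S\<close>] S(2)
        by (smt (verit) mult_left_mono of_nat_0_le_iff of_nat_mono)
    then show ?thesis
      using sum_one_minus_powr_le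
          [where b = "1 - q" and R = R and x = "in_degree S" and c = "real D * real k"]
        q finite_R card_R \<open>0 < m\<close> S(2) by simp
  qed
  finally show ?thesis .
qed

lemma OPT_N_le_nonadaptive:
  "0 < q \<Longrightarrow> q < 1 \<Longrightarrow> 0 < m \<Longrightarrow>
    OPT_N L R E p k \<le> real k + real m * (1 - (1 - q) powr (real D * real k / real m))"
  using sigma_le_nonadaptive by (intro OPT_N_le) auto

end

lemma rich_instance_exists:
  fixes D k m :: nat and q :: real
  assumes q: "0 \<le> q" "q \<le> 1"
  obtains L R E p nbr where "rich_instance L R E p nbr D k m q"
proof -
  define R where "R = {0..<m}"
  define X where "X = {(A, c). A \<subseteq> R \<and> card A = D \<and> c < k}"
  have "finite X"
    by (rule finite_subset[of _ "Pow R \<times> {..<k}"]) (auto simp: X_def R_def)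
  then obtain h where h: "bij_betw h X {0..<card X}" using ex_bij_betw_finite_nat by blast
  define enc where "enc x = m + h x" for x
  have inj: "inj_on enc X" using h unfolding enc_def bij_betw_def inj_on_def by auto
  define L where "L = enc ` X"
  define nbr where "nbr u = fst (inv_into X enc u)" for u
  define E where "E = {(u, w). u \<in> L \<and> w \<in> nbr u}"
  have nbr_enc: "nbr (enc x) = fst x" if "x \<in> X" for x
    unfolding nbr_def using inv_into_f_f[OF inj that] by simp
  have nbr_L: "nbr u \<subseteq> R \<and> card (nbr u) = D" if "u \<in> L" for u
    using that nbr_enc unfolding L_def X_def by auto
  have "bip_graph L R E (\<lambda>_. q)"
    unfolding bip_graph_def using \<open>finite X\<close> nbr_L q
    by (auto simp: L_def R_def E_def enc_def)
  moreover have "\<exists>u\<in>L. u \<notin> Y \<and> nbr u \<subseteq> U"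
    if U: "U \<subseteq> R" "D \<le> card U" and Y: "finite Y" "card Y < k" for U Y
  proof -
    obtain A where A: "A \<subseteq> U" "card A = D" using obtain_subset_with_card_n[OF U(2)] by metis
    then have AX: "(A, c) \<in> X" if "c < k" for c using U that unfolding X_def by auto
    have "inj_on (\<lambda>c. enc (A, c)) {..<k}"
      using inj AX by (auto simp: inj_on_def)
    then have "card ((\<lambda>c. enc (A, c)) ` {..<k}) = k" by (subst card_image) auto
    then have "\<not> (\<lambda>c. enc (A, c)) ` {..<k} \<subseteq> Y"
      using card_mono[OF Y(1), of "(\<lambda>c. enc (A, c)) ` {..<k}"] Y(2) by linarith
    then obtain c where c: "c < k" "enc (A, c) \<notin> Y" by auto
    have "enc (A, c) \<in> L" "nbr (enc (A, c)) = A"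
      using AX[OF c(1)] nbr_enc[OF AX[OF c(1)]] unfolding L_def by auto
    then show ?thesis using c(2) A(1) by blast
  qed
  ultimately have "rich_instance L R E (\<lambda>_. q) nbr D k m q"
    using nbr_L by unfold_locales (auto simp: E_def R_def)
  then show ?thesis by (rule that)
qed

definition lower_ratio :: "nat \<Rightarrow> real" where
  "lower_ratio n = (1 + real n) * real n ^ 4 * (1 - 1 / real n) /
     (real n ^ 4 + real (n ^ 5 + n ^ 4 + n ^ 2) * (1 - (1 - 1 / real n) ^ n))"

lemma lower_ratio_tendsto: "lower_ratio \<longlonglongrightarrow> exp 1 / (exp 1 - 1)"
proof -
  define b where "b n = ((1 + 1 / real n) * (1 - 1 / real n)) /
      (1 / real n + (1 + 1 / real n + (1 / real n) ^ 3) * (1 - (1 + (-1) / real n) ^ n))" for n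
  have "b \<longlonglongrightarrow> ((1 + 0) * (1 - 0)) / (0 + (1 + 0 + 0 ^ 3) * (1 - exp (-1)))"
    unfolding b_def by (intro tendsto_intros tendsto_exp_limit_sequentially) auto
  moreover have "((1 + 0) * (1 - 0)) / (0 + (1 + 0 + 0 ^ 3) * (1 - exp (-1)))
      = exp 1 / (exp 1 - 1::real)"
    by (simp add: exp_minus field_simps)
  moreover have "eventually (\<lambda>n. b n = lower_ratio n) sequentially"
  proof (rule eventually_sequentiallyI[of 1])
    fix n :: nat assume "1 \<le> n"
    then have "0 < real n" by simp
    then show "b n = lower_ratio n"
      unfolding b_def lower_ratio_def by (simp add: field_simps power_eq_if)
  qed
  ultimately show ?thesis using Lim_transform_eventually by metis
qed

text \<open>Every seed has mean degree \<open>n\<close> and the slack is \<open>n\<^sup>4\<close>, so the greedy policy completes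
  its \<open>k\<close> seeds with probability at least \<open>1 - 1/n\<close> and reaches \<open>(1 + n) k (1 - 1/n)\<close> nodes in
  expectation, while a fixed seed set reaches about \<open>k + m (1 - 1/e)\<close>.\<close>

locale lower_instance =
  rich_instance L R E p nbr "n ^ 2" "n ^ 4" "n ^ 5 + n ^ 4 + n ^ 2" "1 / real n" for L R E p nbr n +
  assumes two_le_n: "2 \<le> n"
begin

lemma OPT_A_ge_lower: "(1 + real n) * real n ^ 4 * (1 - 1 / real n) \<le> OPT_A L R E p (n ^ 4)"
proof -
  have n0: "0 < real n" using two_le_n by simp
  have mean: "mean_degree = real n" unfolding mean_degree_def using n0
    by (simp add: power2_eq_square)
  have "slack = real n ^ 4" unfolding slack_def mean by (simp add: power_eq_if)
  then have "real (n ^ 2) * mean_degree * real (n ^ 4) / slack\<^sup>2 = 1 / real n"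
    unfolding mean using n0 by (simp add: field_simps power_eq_if)
  then show ?thesis using OPT_A_ge n0 \<open>slack = real n ^ 4\<close> mean by simp
qed

lemma exponent_le_n: "real (n ^ 2) * real (n ^ 4) / real (n ^ 5 + n ^ 4 + n ^ 2) \<le> real n"
proof -
  have "real (n ^ 2) * real (n ^ 4) \<le> real n * real (n ^ 5 + n ^ 4 + n ^ 2)"
    by (simp only: of_nat_mult[symmetric] of_nat_le_iff) (simp add: algebra_simps power_eq_if)
  moreover have pos: "0 < real (n ^ 5 + n ^ 4 + n ^ 2)" using two_le_n
    by (simp only: of_nat_0_less_iff) simp
  ultimately show ?thesis by (simp only: pos_divide_le_eq[OF pos] mult.commute)
qed

lemma OPT_N_le_lower:
  "OPT_N L R E p (n ^ 4) \<le> real n ^ 4 + real (n ^ 5 + n ^ 4 + n ^ 2) * (1 - (1 - 1 / real n) ^ n)"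
proof -
  let ?a = "real (n ^ 2) * real (n ^ 4) / real (n ^ 5 + n ^ 4 + n ^ 2)"
  have n: "0 < real n" "1 / real n < 1" using two_le_n by auto
  then have base: "0 < 1 - 1 / real n" "1 - 1 / real n \<le> 1" by auto
  then have "(1 - 1 / real n) ^ n = (1 - 1 / real n) powr real n" by (simp add: powr_realpow)
  also have "\<dots> \<le> (1 - 1 / real n) powr ?a"
    by (rule powr_mono'[OF exponent_le_n]) (use base in auto)
  finally have "real (n ^ 5 + n ^ 4 + n ^ 2) * (1 - (1 - 1 / real n) powr ?a)
    \<le> real (n ^ 5 + n ^ 4 + n ^ 2) * (1 - (1 - 1 / real n) ^ n)"
    by (intro mult_left_mono) auto
  moreover have "OPT_N L R E p (n ^ 4)
      \<le> real (n ^ 4) + real (n ^ 5 + n ^ 4 + n ^ 2) * (1 - (1 - 1 / real n) powr ?a)"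
    by (rule OPT_N_le_nonadaptive) (use n two_le_n in auto)
  ultimately show ?thesis by simp
qed

lemma lower_ratio_le: "lower_ratio n \<le> OPT_A L R E p (n ^ 4) / OPT_N L R E p (n ^ 4)"
proof -
  have "0 < (1 + real n) * real n ^ 4 * (1 - 1 / real n)"
    using two_le_n by (intro mult_pos_pos) auto
  moreover have "0 < OPT_N L R E p (n ^ 4)"
  proof -
    have "0 < (1 - exp (-1)) * OPT_A L R E p (n ^ 4)"
      using OPT_A_ge_lower calculation by (intro mult_pos_pos) auto
    then show ?thesis using OPT_A_le_OPT_N[of "n ^ 4"] by linarith
  qed
  ultimately show ?thesis
    unfolding lower_ratio_def using OPT_A_ge_lower OPT_N_le_lower by (intro frac_le) auto
qed

end

lemma lower_ratio_le_ratio: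
  assumes n: "2 \<le> n"
  obtains L R E p where "bip_graph L R E p"
    "lower_ratio n \<le> OPT_A L R E p (n ^ 4) / OPT_N L R E p (n ^ 4)"
proof -
  have "0 \<le> 1 / real n" "1 / real n \<le> 1" using n by auto
  then obtain L R E p nbr
    where "rich_instance L R E p nbr (n ^ 2) (n ^ 4) (n ^ 5 + n ^ 4 + n ^ 2) (1 / real n)"
    by (rule rich_instance_exists)
  then interpret lower_instance L R E p nbr n
    using n by (intro lower_instance.intro lower_instance_axioms.intro)
  show ?thesis using bip_graph lower_ratio_le by (rule that)
qed

theorem theorem3:
  defines "ratios \<equiv> {OPT_A L R E p k / OPT_N L R E p k | L R E p k.
                        bip_graph L R E p \<and> k \<ge> 1}"
  shows "bdd_above ratios \<and> Sup ratios = exp 1 / (exp 1 - 1)"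
proof -
  have upper: "x \<le> exp 1 / (exp 1 - 1)" if "x \<in> ratios" for x
    using that bip_influence_graph.ratio_le unfolding ratios_def bip_influence_graph_def by blast
  then have bdd: "bdd_above ratios" by (rule bdd_aboveI)
  have witness: "\<exists>r\<in>ratios. lower_ratio n \<le> r" if n: "2 \<le> n" for n
  proof -
    obtain L R E p where "bip_graph L R E p"
      and "lower_ratio n \<le> OPT_A L R E p (n ^ 4) / OPT_N L R E p (n ^ 4)"
      by (rule lower_ratio_le_ratio[OF n])
    moreover have "1 \<le> n ^ 4" using n by simp
    ultimately show ?thesis unfolding ratios_def by blast
  qed
  then have lower: "lower_ratio n \<le> Sup ratios" if "2 \<le> n" for n
    using that cSup_upper[OF _ bdd] order_trans by blast
  have "ratios \<noteq> {}" using witness[of 2] by auto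
  then have "Sup ratios \<le> exp 1 / (exp 1 - 1)" using upper by (rule cSup_least)
  moreover have "exp 1 / (exp 1 - 1) \<le> Sup ratios"
    using lower_ratio_tendsto by (rule LIMSEQ_le_const2) (use lower in auto)
  ultimately show ?thesis using bdd by simp
qed

end
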